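(* Let $(\Sigma,T)$ be a finite convergent length-reducing rewriting system such that $\Sigma=\Sigma^{-1}$ and $(\Sigma,T)$ presents a group $G$. Let $\Gamma$ denote the undirected Cayley graph of $G$ with respect to $\Sigma$. Then (1) $\Gamma$ is geodetic; and (2) if $u_0,u_1,\dots,u_{m-1},u_m=u_0$ is an isometrically embedded circuit in $\Gamma$ of length $m>2$, then $m=2n+1$ for some positive integer $n$ and $(x_1\cdots x_{n+1},\,x_m^{-1}\cdots x_{n+2}^{-1})\in T$, where for $1\le i\le m$, $x_i\in\Sigma$ is a letter with $x_i=_G u_{i-1}^{-1}u_i$.
   Context: A rewriting system $(\Sigma,T)$ has alphabet $\Sigma$ and rules $T\subseteq\Sigma^*\times\Sigma^*$, inducing rewrites $u\ell v\to urv$ for $(\ell,r)\in T$; the group presented is $\Sigma^*$ modulo the equivalence generated by $\to$. Finite: $\Sigma,T$ finite; length-reducing: $|\ell|>|r|$ for all rules; convergent: terminating (no infinite rewrite sequences) and confluent (any two words reachable by rewriting from a common word can be rewritten to a common word). $\Sigma=\Sigma^{-1}$ means for each letter $x$ there is a letter $x^{-1}\in\Sigma$ representing its inverse in $G$. The undirected Cayley graph $\Gamma(G,\Sigma)$ has vertex set $G$, distinct $g,h$ adjacent iff $g^{-1}h$ is represented by an element of $\Sigma\cup\Sigma^{-1}$. A graph is geodetic if between any two vertices there is a unique shortest path; $d$ is the path metric. A path $u_0,\dots,u_m$ is an embedded circuit of length $m$ if $u_0,\dots,u_{m-1}$ are distinct and $u_0=u_m$; it is isometrically embedded if $d(u_i,u_j)=\min\{j-i,m+i-j\}$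 for all $0\le i<j<m$. *)

theory Defs
  imports Main
begin

definition rstep :: "('a list \<times> 'a list) set \<Rightarrow> ('a list \<times> 'a list) set" where
  "rstep T = {(u @ l @ v, u @ r @ v) | u l r v. (l, r) \<in> T}"

definition length_reducing :: "('a list \<times> 'a list) set \<Rightarrow> bool" where
  "length_reducing T \<longleftrightarrow> (\<forall>(l, r) \<in> T. length r < length l)"

definition terminating :: "'a set \<Rightarrow> ('a list \<times> 'a list) set \<Rightarrow> bool" where
  "terminating \<Sigma> T \<longleftrightarrow>
     \<not> (\<exists>f :: nat \<Rightarrow> 'a list. f 0 \<in> lists \<Sigma> \<and> (\<forall>i. (f i, f (Suc i)) \<in> rstep T))"

definition confluent :: "'a set \<Rightarrow> ('a list \<times> 'a list) set \<Rightarrow> bool" where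
  "confluent \<Sigma> T \<longleftrightarrow>
     (\<forall>w \<in> lists \<Sigma>. \<forall>a b. (w, a) \<in> (rstep T)\<^sup>* \<and> (w, b) \<in> (rstep T)\<^sup>* \<longrightarrow>
        (\<exists>c. (a, c) \<in> (rstep T)\<^sup>* \<and> (b, c) \<in> (rstep T)\<^sup>*))"

definition convergent :: "'a set \<Rightarrow> ('a list \<times> 'a list) set \<Rightarrow> bool" where
  "convergent \<Sigma> T \<longleftrightarrow> terminating \<Sigma> T \<and> confluent \<Sigma> T"

definition finite_rs :: "'a set \<Rightarrow> ('a list \<times> 'a list) set \<Rightarrow> bool" where
  "finite_rs \<Sigma> T \<longleftrightarrow> finite \<Sigma> \<and> finite T \<and> T \<subseteq> lists \<Sigma> \<times> lists \<Sigma>"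

text \<open>The equivalence generated by rewriting; elements of the presented group G
  are its classes of words over \<Sigma>.\<close>
definition req :: "('a list \<times> 'a list) set \<Rightarrow> ('a list \<times> 'a list) set" where
  "req T = (rstep T \<union> (rstep T)\<inverse>)\<^sup>*"

definition cls :: "('a list \<times> 'a list) set \<Rightarrow> 'a list \<Rightarrow> 'a list set" where
  "cls T w = req T `` {w}"

definition grp :: "'a set \<Rightarrow> ('a list \<times> 'a list) set \<Rightarrow> 'a list set set" where
  "grp \<Sigma> T = lists \<Sigma> // req T"

text \<open>\<Sigma> = \<Sigma>^{-1}: every letter has a letter in \<Sigma> representing its inverse in G.\<close>
definition inv_closed :: "'a set \<Rightarrow> ('a list \<times> 'a list) set \<Rightarrow> bool" where
  "inv_closed \<Sigma> T \<longleftrightarrow>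
     (\<forall>x \<in> \<Sigma>. \<exists>y \<in> \<Sigma>. ([x, y], []) \<in> req T \<and> ([y, x], []) \<in> req T)"

definition cay_adj :: "'a set \<Rightarrow> ('a list \<times> 'a list) set \<Rightarrow> 'a list set \<Rightarrow> 'a list set \<Rightarrow> bool" where
  "cay_adj \<Sigma> T g h \<longleftrightarrow> g \<noteq> h \<and>
     (\<exists>w \<in> lists \<Sigma>. \<exists>x \<in> \<Sigma>.
        (g = cls T w \<and> h = cls T (w @ [x])) \<or> (h = cls T w \<and> g = cls T (w @ [x])))"

text \<open>A walk from g to h, given as the list of its vertices; its length is length p - 1.\<close>
definition is_walk :: "'v set \<Rightarrow> ('v \<Rightarrow> 'v \<Rightarrow> bool) \<Rightarrow> 'v list \<Rightarrow> 'v \<Rightarrow> 'v \<Rightarrow> bool" where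
  "is_walk V adj p g h \<longleftrightarrow> p \<noteq> [] \<and> set p \<subseteq> V \<and> hd p = g \<and> last p = h \<and>
     (\<forall>i. Suc i < length p \<longrightarrow> adj (p ! i) (p ! Suc i))"

definition gdist :: "'v set \<Rightarrow> ('v \<Rightarrow> 'v \<Rightarrow> bool) \<Rightarrow> 'v \<Rightarrow> 'v \<Rightarrow> nat" where
  "gdist V adj g h = (LEAST n. \<exists>p. is_walk V adj p g h \<and> length p = Suc n)"

definition geodetic :: "'v set \<Rightarrow> ('v \<Rightarrow> 'v \<Rightarrow> bool) \<Rightarrow> bool" where
  "geodetic V adj \<longleftrightarrow>
     (\<forall>g \<in> V. \<forall>h \<in> V. \<exists>!p. is_walk V adj p g h \<and> length p = Suc (gdist V adj g h))"

definition embedded_circuit :: "'v set \<Rightarrow> ('v \<Rightarrow> 'v \<Rightarrow> bool) \<Rightarrow> (nat \<Rightarrow> 'v) \<Rightarrow> nat \<Rightarrow> bool" where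
  "embedded_circuit V adj u m \<longleftrightarrow>
     (\<forall>i \<le> m. u i \<in> V) \<and> (\<forall>i < m. adj (u i) (u (Suc i))) \<and>
     inj_on u {..<m} \<and> u m = u 0"

definition isometric_circuit :: "'v set \<Rightarrow> ('v \<Rightarrow> 'v \<Rightarrow> bool) \<Rightarrow> (nat \<Rightarrow> 'v) \<Rightarrow> nat \<Rightarrow> bool" where
  "isometric_circuit V adj u m \<longleftrightarrow> embedded_circuit V adj u m \<and>
     (\<forall>i j. i < j \<and> j < m \<longrightarrow> gdist V adj (u i) (u j) = min (j - i) (m + i - j))"

end

theory Submission
  imports Defs
begin

(* Because T is length-reducing and confluent, every element of G has exactly one irreducible
   representative, and that word is strictly shorter than every other word representing it.
   The letters read along a walk from g to h spell a word for g^-1 h, so the geodesics from g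
   to h correspond to the shortest such words, and there is only one: the irreducible one.
   In a geodetic graph an isometric circuit of even length 2k would give two geodesics from
   u_0 to u_k, hence m = 2n + 1. Then x_1 ... x_(n+1) spells a walk of length n + 1 between
   vertices at distance n, so it is reducible, whereas x_1 ... x_n and x_2 ... x_(n+1) spell
   geodesics and are irreducible; hence x_1 ... x_(n+1) is itself a left-hand side. Its
   right-hand side is a word of length at most n equal in G to the irreducible word
   y_m ... y_(n+2) of length n, so the two coincide. *)

section \<open>Irreducible words\<close>

definition irreducible_word :: "('a list \<times> 'a list) set \<Rightarrow> 'a list \<Rightarrow> bool" where
  "irreducible_word T w \<longleftrightarrow> (\<forall>v. (w, v) \<notin> rstep T)"

lemma rstep_append_context: "(a, b) \<in> rstep T \<Longrightarrow> (c @ a @ d, c @ b @ d) \<in> rstep T"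
  unfolding rstep_def by auto (metis append.assoc)

lemma rule_in_rstep:
  assumes "(l, r) \<in> T"
  shows "(l, r) \<in> rstep T"
proof -
  have "([] @ l @ [], [] @ r @ []) \<in> rstep T"
    unfolding rstep_def using assms by blast
  then show ?thesis by simp
qed

lemma rstep_length_less: "length_reducing T \<Longrightarrow> (a, b) \<in> rstep T \<Longrightarrow> length b < length a"
  unfolding rstep_def length_reducing_def by fastforce

lemma rtrancl_rstep_length_less:
  assumes "length_reducing T" "(a, b) \<in> (rstep T)\<^sup>*" "a \<noteq> b"
  shows "length b < length a"
  using assms(2,3)
proof (induction rule: converse_rtrancl_induct)
  case (step a a')
  then show ?case
    using rstep_length_less[OF assms(1) step(1)] by (cases "a' = b") auto
qed simp

lemma irreducible_word_Nil: "length_reducing T \<Longrightarrow> irreducible_word T []"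
  unfolding irreducible_word_def rstep_def length_reducing_def by fastforce

lemma irreducible_word_infix: "irreducible_word T (u @ w @ v) \<Longrightarrow> irreducible_word T w"
  unfolding irreducible_word_def using rstep_append_context by blast

lemma rtrancl_rstep_from_irreducible:
  "(a, b) \<in> (rstep T)\<^sup>* \<Longrightarrow> irreducible_word T a \<Longrightarrow> b = a"
  unfolding irreducible_word_def by (metis converse_rtranclE)

lemma exists_normal_form:
  assumes "length_reducing T"
  shows "\<exists>N. (a, N) \<in> (rstep T)\<^sup>* \<and> irreducible_word T N"
proof (induction "length a" arbitrary: a rule: less_induct)
  case less
  show ?case
  proof (cases "irreducible_word T a")
    case False
    then obtain b where b: "(a, b) \<in> rstep T" unfolding irreducible_word_def by blast
    with less rstep_length_less[OF assms b] obtain N where "(b, N) \<in> (rstep T)\<^sup>*" "irreducible_word T N"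
      by blast
    with b show ?thesis by (meson converse_rtrancl_into_rtrancl)
  qed blast
qed

lemma reducible_with_irreducible_ends_is_lhs:
  assumes "\<not> irreducible_word T X" "irreducible_word T (tl X)" "irreducible_word T (butlast X)"
  obtains r where "(X, r) \<in> T"
proof -
  obtain a l r b where X: "X = a @ l @ b" and lr: "(l, r) \<in> T"
    using assms(1) unfolding irreducible_word_def rstep_def by blast
  have not_irreducible: "\<not> irreducible_word T (a' @ l @ b')" for a' b'
    using irreducible_word_infix rule_in_rstep[OF lr] unfolding irreducible_word_def by blast
  have "a = []"
  proof (rule ccontr)
    assume "a \<noteq> []"
    then have "tl X = tl a @ l @ b"
      using X by simp
    with assms(2) not_irreducible show False
      by simp
  qed
  moreover have "b = []"
  proof (rule ccontr)
    assume "b \<noteq> []"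
    then have "butlast X = a @ l @ butlast b"
      using X by (simp add: butlast_append)
    with assms(3) not_irreducible show False
      by simp
  qed
  ultimately show thesis using that lr X by simp
qed

section \<open>Equality in the presented group\<close>

lemma req_refl: "(a, a) \<in> req T"
  unfolding req_def by simp

lemma req_sym: "(a, b) \<in> req T \<Longrightarrow> (b, a) \<in> req T"
  unfolding req_def
  by (metis (no_types, lifting) converse_Un converse_converse rtrancl_converseI sup_commute)

lemma req_trans: "(a, b) \<in> req T \<Longrightarrow> (b, c) \<in> req T \<Longrightarrow> (a, c) \<in> req T"
  unfolding req_def by (rule rtrancl_trans)

lemma rtrancl_rstep_into_req: "(a, b) \<in> (rstep T)\<^sup>* \<Longrightarrow> (a, b) \<in> req T"
  unfolding req_def by (meson in_rtrancl_UnI)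

lemma req_append_context: "(a, b) \<in> req T \<Longrightarrow> (c @ a @ d, c @ b @ d) \<in> req T"
  unfolding req_def
proof (induction rule: rtrancl_induct)
  case (step b b')
  then have "(c @ b @ d, c @ b' @ d) \<in> rstep T \<union> (rstep T)\<inverse>"
    using rstep_append_context by blast
  with step.IH show ?case by (rule rtrancl_into_rtrancl)
qed simp

lemma cls_eq_iff: "cls T a = cls T b \<longleftrightarrow> (a, b) \<in> req T"
  unfolding cls_def using req_refl req_sym req_trans by blast

lemma cls_append_context: "cls T a = cls T b \<Longrightarrow> cls T (c @ a @ d) = cls T (c @ b @ d)"
  using req_append_context by (metis cls_eq_iff)

lemma cls_append_left: "cls T a = cls T b \<Longrightarrow> cls T (c @ a) = cls T (c @ b)"
  using req_append_context[of a b T c "[]"] by (simp add: cls_eq_iff)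

lemma cls_append_right: "cls T a = cls T b \<Longrightarrow> cls T (a @ c) = cls T (b @ c)"
  using req_append_context[of a b T "[]" c] by (simp add: cls_eq_iff)

lemma cls_append_inverse_letter:
  assumes "cls T v = cls T (w @ [x])" "([x, y], []) \<in> req T"
  shows "cls T (v @ [y]) = cls T w"
proof -
  have "cls T (v @ [y]) = cls T (w @ [x, y] @ [])"
    using cls_append_right[OF assms(1)] by simp
  also have "\<dots> = cls T (w @ [] @ [])"
    using req_append_context[OF assms(2)] by (simp only: cls_eq_iff)
  finally show ?thesis by simp
qed

section \<open>Walks, geodesics and circuits\<close>

lemma is_walk_rev:
  assumes "symp adj" "is_walk V adj p g h"
  shows "is_walk V adj (rev p) h g"
  unfolding is_walk_def
proof (intro conjI allI impI)
  fix i assume i: "Suc i < length (rev p)"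
  have "adj (p ! (length p - Suc (Suc i))) (p ! Suc (length p - Suc (Suc i)))"
    using assms(2) i unfolding is_walk_def by simp
  then show "adj (rev p ! i) (rev p ! Suc i)"
    using i assms(1) by (simp add: rev_nth Suc_diff_Suc symp_def)
qed (use assms(2) in \<open>auto simp: is_walk_def hd_rev last_rev\<close>)

lemma is_walk_ConsD:
  assumes "is_walk V adj (g # g' # p) g0 h"
  shows "g = g0" and "adj g g'" and "is_walk V adj (g' # p) g' h"
proof -
  have adj: "adj ((g # g' # p) ! i) ((g # g' # p) ! Suc i)" if "Suc i < length (g # g' # p)" for i
    using assms that unfolding is_walk_def by blast
  show "g = g0"
    using assms unfolding is_walk_def by simp
  show "adj g g'"
    using adj[of 0] by simp
  have "adj ((g' # p) ! i) ((g' # p) ! Suc i)" if "Suc i < length (g' # p)" for i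
    using adj[of "Suc i"] that by simp
  then show "is_walk V adj (g' # p) g' h"
    using assms unfolding is_walk_def by auto
qed

lemma geodesic_unique:
  assumes "geodetic V adj"
    and "is_walk V adj p g h" "length p = Suc (gdist V adj g h)"
    and "is_walk V adj q g h" "length q = Suc (gdist V adj g h)"
  shows "p = q"
proof -
  have "g \<in> V" "h \<in> V"
    using assms(2) hd_in_set last_in_set unfolding is_walk_def by (metis subsetD)+
  then show ?thesis
    using assms unfolding geodetic_def by blast
qed

lemma embedded_circuit_segment_walk:
  assumes "embedded_circuit V adj u m" "i \<le> j" "j \<le> m"
  shows "is_walk V adj (map u [i..<Suc j]) (u i) (u j)"
  using assms unfolding is_walk_def embedded_circuit_def
  by (auto simp: hd_map last_map simp del: upt_Suc)

lemma isometric_circuit_odd: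
  assumes "geodetic V adj" "symp adj" "isometric_circuit V adj u m" "2 < m"
  shows "odd m"
proof
  assume "even m"
  then obtain k where m: "m = 2 * k" ..
  have circuit: "embedded_circuit V adj u m"
    using assms(3) unfolding isometric_circuit_def by blast
  define p where "p = map u [0..<Suc k]"
  define q where "q = rev (map u [k..<Suc m])"
  have "k \<le> m" "u m = u 0"
    using m circuit unfolding embedded_circuit_def by auto
  have "is_walk V adj p (u 0) (u k)"
    unfolding p_def using embedded_circuit_segment_walk[OF circuit _ \<open>k \<le> m\<close>] by simp
  moreover have "is_walk V adj q (u 0) (u k)"
    using is_walk_rev[OF assms(2) embedded_circuit_segment_walk[OF circuit \<open>k \<le> m\<close> order.refl]]
      \<open>u m = u 0\<close> unfolding q_def by simp
  moreover have "gdist V adj (u 0) (u k) = k"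
    using assms(3,4) m unfolding isometric_circuit_def by simp
  ultimately have "p = q"
    using geodesic_unique[OF assms(1)] m by (simp add: p_def q_def)
  moreover have "p ! 1 = u 1"
    using assms(4) m by (simp add: p_def del: upt_Suc)
  moreover have "q ! 1 = u (m - 1)"
    using assms(4) m by (simp add: q_def rev_nth mult_2 del: upt_Suc)
  ultimately have "u 1 = u (m - 1)"
    by simp
  then show False
    using circuit assms(4) inj_onD[of u "{..<m}" 1 "m - 1"] unfolding embedded_circuit_def by simp
qed

section \<open>Words labelling paths in the Cayley graph\<close>

lemma cay_adj_symp: "symp (cay_adj \<Sigma> T)"
  unfolding symp_def cay_adj_def by blast

definition word_path :: "('a list \<times> 'a list) set \<Rightarrow> 'a list \<Rightarrow> 'a list \<Rightarrow> 'a list set list" where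
  "word_path T w z = map (\<lambda>i. cls T (w @ take i z)) [0..<Suc (length z)]"

lemma labelled_path_prefix:
  assumes "\<forall>i \<in> {1..m}. \<exists>w. u (i - 1) = cls T w \<and> u i = cls T (w @ [x i])"
    and "u 0 = cls T w0" "i \<le> m"
  shows "u i = cls T (w0 @ map x [1..<Suc i])"
  using assms(3)
proof (induction i)
  case (Suc i)
  obtain w where "u i = cls T w" "u (Suc i) = cls T (w @ [x (Suc i)])"
    using bspec[OF assms(1), of "Suc i"] Suc.prems by auto
  with Suc show ?case
    using cls_append_right[of T "w0 @ map x [1..<Suc i]" w "[x (Suc i)]"] by simp
qed (simp add: assms(2))

lemma labelled_path_suffix:
  assumes "\<forall>i \<in> {1..m}. \<exists>w. u (i - 1) = cls T w \<and> u i = cls T (w @ [x i])"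
    and "\<forall>i \<in> {1..m}. ([x i, y i], []) \<in> req T"
    and "u m = cls T w0" "j \<le> m"
  shows "u (m - j) = cls T (w0 @ map y (rev [m - j + 1..<m + 1]))"
  using assms(4)
proof (induction j)
  case (Suc j)
  define i where "i = m - j"
  have i: "i \<in> {1..m}" "m - Suc j = i - 1" "m - Suc j + 1 = i"
    using Suc.prems by (auto simp: i_def)
  obtain w where w: "u (i - 1) = cls T w" "u i = cls T (w @ [x i])"
    using assms(1) i(1) by blast
  have "cls T (w0 @ map y (rev [i + 1..<m + 1]) @ [y i]) = cls T w"
    using cls_append_inverse_letter[of T "w0 @ map y (rev [i + 1..<m + 1])" w "x i" "y i"]
      Suc w assms(2) i(1) by (simp add: i_def)
  moreover have "[i..<m + 1] = i # [i + 1..<m + 1]"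
    using i(1) by (simp add: upt_conv_Cons del: upt_Suc)
  ultimately show ?case
    using w(1) i by simp
qed (simp add: assms(3))

section \<open>Rewriting systems presenting a group\<close>

locale group_rewriting_system =
  fixes \<Sigma> :: "'a set" and T :: "('a list \<times> 'a list) set"
  assumes rules_over_alphabet: "T \<subseteq> lists \<Sigma> \<times> lists \<Sigma>"
    and confluent: "confluent \<Sigma> T"
    and length_reducing: "length_reducing T"
    and inv_closed: "inv_closed \<Sigma> T"
begin

abbreviation cay_walk :: "'a list set list \<Rightarrow> 'a list set \<Rightarrow> 'a list set \<Rightarrow> bool" where
  "cay_walk \<equiv> is_walk (grp \<Sigma> T) (cay_adj \<Sigma> T)"

abbreviation cay_dist :: "'a list set \<Rightarrow> 'a list set \<Rightarrow> nat" where
  "cay_dist \<equiv> gdist (grp \<Sigma> T) (cay_adj \<Sigma> T)"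

lemma rstep_lists_iff: "(a, b) \<in> rstep T \<Longrightarrow> a \<in> lists \<Sigma> \<longleftrightarrow> b \<in> lists \<Sigma>"
  using rules_over_alphabet unfolding rstep_def by fastforce

lemma req_lists:
  assumes "(a, b) \<in> req T" "a \<in> lists \<Sigma>"
  shows "b \<in> lists \<Sigma>"
  using assms(1) unfolding req_def
proof (induction rule: rtrancl_induct)
  case (step b c)
  then show ?case
    using rstep_lists_iff by blast
qed (rule assms(2))

lemma church_rosser:
  assumes "(a, b) \<in> req T" "a \<in> lists \<Sigma>"
  shows "\<exists>c. (a, c) \<in> (rstep T)\<^sup>* \<and> (b, c) \<in> (rstep T)\<^sup>*"
  using assms(1) unfolding req_def
proof (induction rule: rtrancl_induct)
  case (step b b')
  then obtain c where c: "(a, c) \<in> (rstep T)\<^sup>*" "(b, c) \<in> (rstep T)\<^sup>*" by blast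
  have "b \<in> lists \<Sigma>"
    using req_lists[OF _ assms(2)] step.hyps(1) unfolding req_def by blast
  show ?case
  proof (cases "(b, b') \<in> rstep T")
    case True
    then obtain d where "(b', d) \<in> (rstep T)\<^sup>*" "(c, d) \<in> (rstep T)\<^sup>*"
      using confluent \<open>b \<in> lists \<Sigma>\<close> c(2) unfolding confluent_def by blast
    with c(1) show ?thesis by (meson rtrancl_trans)
  next
    case False
    with step.hyps(2) have "(b', b) \<in> rstep T"
      by blast
    with c show ?thesis
      by (blast intro: converse_rtrancl_into_rtrancl)
  qed
qed blast

lemma irreducible_req_eq:
  assumes "a \<in> lists \<Sigma>" "irreducible_word T a" "irreducible_word T b" "(a, b) \<in> req T"
  shows "a = b"
  using assms church_rosser rtrancl_rstep_from_irreducible by metis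

lemma irreducible_word_shortest:
  assumes "a \<in> lists \<Sigma>" "(a, b) \<in> req T" "irreducible_word T b"
  shows "length b \<le> length a" and "length a = length b \<Longrightarrow> a = b"
proof -
  obtain N where N: "(a, N) \<in> (rstep T)\<^sup>*" "irreducible_word T N"
    using exists_normal_form[OF length_reducing] by blast
  have aN: "(a, N) \<in> req T"
    using rtrancl_rstep_into_req[OF N(1)] .
  have "N = b"
    using irreducible_req_eq[OF req_lists[OF aN assms(1)] N(2) assms(3) req_trans[OF req_sym[OF aN] assms(2)]] .
  moreover have "length N \<le> length a" and "length a = length N \<Longrightarrow> a = N"
    using rtrancl_rstep_length_less[OF length_reducing N(1)] by (cases "a = N"; simp)+
  ultimately show "length b \<le> length a" and "length a = length b \<Longrightarrow> a = b"
    by simp_all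
qed

lemma rule_rhs_eq_irreducible:
  assumes "(X, r) \<in> T" "(X, Y) \<in> req T" "irreducible_word T Y" "length X = Suc (length Y)"
  shows "r = Y"
proof -
  have "(X, r) \<in> req T"
    using rtrancl_rstep_into_req rule_in_rstep[OF assms(1)] by blast
  then have "(r, Y) \<in> req T"
    using req_trans[OF req_sym assms(2)] by blast
  moreover have "r \<in> lists \<Sigma>"
    using assms(1) rules_over_alphabet by blast
  moreover have "length r < length X"
    using rstep_length_less[OF length_reducing rule_in_rstep[OF assms(1)]] .
  ultimately show ?thesis
    using irreducible_word_shortest[of r Y] assms(3,4) by fastforce
qed

lemma exists_inverse_word:
  "w \<in> lists \<Sigma> \<Longrightarrow> \<exists>v \<in> lists \<Sigma>. (v @ w, []) \<in> req T \<and> (w @ v, []) \<in> req T"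
proof (induction w)
  case Nil
  then show ?case using req_refl by fastforce
next
  case (Cons a w)
  then obtain v where v: "v \<in> lists \<Sigma>" "cls T (v @ w) = cls T []" "cls T (w @ v) = cls T []"
    by (auto simp: cls_eq_iff)
  obtain b where b: "b \<in> \<Sigma>" "cls T [a, b] = cls T []" "cls T [b, a] = cls T []"
    using inv_closed Cons.prems unfolding inv_closed_def by (auto simp: cls_eq_iff)
  have "cls T ((v @ [b]) @ a # w) = cls T (v @ [b, a] @ w)"
    by simp
  also have "\<dots> = cls T (v @ w)"
    using cls_append_context[OF b(3)] by simp
  finally have left: "cls T ((v @ [b]) @ a # w) = cls T []"
    using v(2) by simp
  have "cls T ((a # w) @ v @ [b]) = cls T ([a] @ (w @ v) @ [b])"
    by simp
  also have "\<dots> = cls T [a, b]"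
    using cls_append_context[OF v(3), of "[a]" "[b]"] by simp
  finally have right: "cls T ((a # w) @ v @ [b]) = cls T []"
    using b(2) by simp
  from left right show ?case
    using v b by (intro bexI[of _ "v @ [b]"]) (auto simp: cls_eq_iff)
qed

lemma req_left_cancel:
  assumes "w \<in> lists \<Sigma>" "(w @ a, w @ b) \<in> req T"
  shows "(a, b) \<in> req T"
proof -
  obtain v where v: "cls T (v @ w) = cls T []"
    using exists_inverse_word[OF assms(1)] by (auto simp: cls_eq_iff)
  have "cls T a = cls T ((v @ w) @ a)"
    using cls_append_right[OF v] by simp
  also have "\<dots> = cls T ((v @ w) @ b)"
    using cls_append_left[of T "w @ a" "w @ b" v] assms(2) by (simp add: cls_eq_iff)
  also have "\<dots> = cls T b"
    using cls_append_right[OF v] by simp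
  finally show ?thesis by (simp add: cls_eq_iff)
qed

lemma cls_append_irreducible_letter:
  assumes "w \<in> lists \<Sigma>" "irreducible_word T [x]"
  shows "cls T w \<noteq> cls T (w @ [x])"
proof
  assume "cls T w = cls T (w @ [x])"
  then have "(w @ [], w @ [x]) \<in> req T"
    by (simp add: cls_eq_iff)
  then have "([], [x]) \<in> req T"
    by (rule req_left_cancel[OF assms(1)])
  then show False
    using irreducible_req_eq[OF _ irreducible_word_Nil[OF length_reducing] assms(2)] by simp
qed

lemma cls_in_grp: "w \<in> lists \<Sigma> \<Longrightarrow> cls T w \<in> grp \<Sigma> T"
  unfolding grp_def cls_def quotient_def by blast

lemma grp_elemE:
  assumes "g \<in> grp \<Sigma> T"
  obtains w where "w \<in> lists \<Sigma>" "g = cls T w"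
  using assms unfolding grp_def cls_def quotient_def by blast

lemma cay_adj_append_letter:
  assumes "cay_adj \<Sigma> T g h" "g = cls T w"
  shows "\<exists>x \<in> \<Sigma>. h = cls T (w @ [x])"
proof -
  obtain v x where x: "x \<in> \<Sigma>"
    and vx: "(g = cls T v \<and> h = cls T (v @ [x])) \<or> (h = cls T v \<and> g = cls T (v @ [x]))"
    using assms(1) unfolding cay_adj_def by blast
  from vx show ?thesis
  proof
    assume "g = cls T v \<and> h = cls T (v @ [x])"
    then show ?thesis
      using x assms(2) cls_append_right by metis
  next
    assume gh: "h = cls T v \<and> g = cls T (v @ [x])"
    obtain y where "y \<in> \<Sigma>" "([x, y], []) \<in> req T"
      using inv_closed x unfolding inv_closed_def by blast
    then show ?thesis
      using cls_append_inverse_letter[of T w v x y] gh assms(2) by metis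
  qed
qed

lemma walk_labelled_by_word:
  assumes "cay_walk p (cls T w) h"
  shows "\<exists>z \<in> lists \<Sigma>. length p = Suc (length z) \<and>
           (\<forall>i < length p. p ! i = cls T (w @ take i z))"
  using assms
proof (induction p arbitrary: w)
  case (Cons g p)
  show ?case
  proof (cases "p = []")
    case True
    with Cons.prems show ?thesis
      by (intro bexI[of _ "[]"]) (auto simp: is_walk_def)
  next
    case False
    then obtain g' p' where "p = g' # p'"
      by (cases p) auto
    with Cons.prems have walk: "cay_walk (g # g' # p') (cls T w) h"
      by simp
    obtain x where x: "x \<in> \<Sigma>" "g' = cls T (w @ [x])"
      using cay_adj_append_letter[OF is_walk_ConsD(2)[OF walk] is_walk_ConsD(1)[OF walk]] by blast
    have "cay_walk p (cls T (w @ [x])) h"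
      using is_walk_ConsD(3)[OF walk] x(2) \<open>p = g' # p'\<close> by simp
    then obtain z where z: "z \<in> lists \<Sigma>" "length p = Suc (length z)"
      "\<forall>i < length p. p ! i = cls T ((w @ [x]) @ take i z)"
      using Cons.IH by blast
    show ?thesis
    proof (intro bexI[of _ "x # z"] conjI allI impI)
      fix i assume "i < length (g # p)"
      then show "(g # p) ! i = cls T (w @ take i (x # z))"
        using z(3) is_walk_ConsD(1)[OF walk] by (cases i) auto
    qed (use x z in auto)
  qed
qed (simp add: is_walk_def)

lemma word_path_is_walk:
  assumes "w \<in> lists \<Sigma>" "N \<in> lists \<Sigma>" "irreducible_word T N"
  shows "cay_walk (word_path T w N) (cls T w) (cls T (w @ N))"
  unfolding is_walk_def
proof (intro conjI allI impI)
  have prefix: "w @ take i N \<in> lists \<Sigma>" for i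
    using assms(1,2) by (metis append_in_lists_conv append_take_drop_id)
  then show "set (word_path T w N) \<subseteq> grp \<Sigma> T"
    unfolding word_path_def set_map by (intro image_subsetI cls_in_grp prefix)
  show "word_path T w N \<noteq> []" "last (word_path T w N) = cls T (w @ N)"
    by (simp_all add: word_path_def)
  show "hd (word_path T w N) = cls T w"
    by (simp add: word_path_def upt_conv_Cons del: upt_Suc)
  fix i assume "Suc i < length (word_path T w N)"
  then have i: "i < length N" by (simp add: word_path_def)
  have "N = take i N @ [N ! i] @ drop (Suc i) N"
    using id_take_nth_drop[OF i] by simp
  then have "irreducible_word T [N ! i]"
    using assms(3) irreducible_word_infix by metis
  then have "cls T (w @ take i N) \<noteq> cls T ((w @ take i N) @ [N ! i])"
    by (rule cls_append_irreducible_letter[OF prefix])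
  moreover have "word_path T w N ! i = cls T (w @ take i N)"
    and "word_path T w N ! Suc i = cls T ((w @ take i N) @ [N ! i])"
    using i by (simp_all add: word_path_def take_Suc_conv_app_nth del: upt_Suc)
  moreover have "N ! i \<in> \<Sigma>"
    using assms(2) i by (simp add: in_lists_conv_set)
  ultimately show "cay_adj \<Sigma> T (word_path T w N ! i) (word_path T w N ! Suc i)"
    unfolding cay_adj_def using prefix by blast
qed

lemma walk_to_irreducible_word:
  assumes "cay_walk p (cls T w) (cls T (w @ N))" "w \<in> lists \<Sigma>" "irreducible_word T N"
  shows "length N < length p" and "length p = Suc (length N) \<Longrightarrow> p = word_path T w N"
proof -
  obtain z where z: "z \<in> lists \<Sigma>" "length p = Suc (length z)"
    "\<forall>i < length p. p ! i = cls T (w @ take i z)"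
    using walk_labelled_by_word assms(1) by blast
  have "p \<noteq> []"
    using z(2) by auto
  then have "last p = cls T (w @ z)"
    using z(2,3) by (simp add: last_conv_nth)
  then have "cls T (w @ z) = cls T (w @ N)"
    using assms(1) unfolding is_walk_def by simp
  then have "(w @ z, w @ N) \<in> req T"
    by (simp add: cls_eq_iff)
  then have zN: "(z, N) \<in> req T"
    using req_left_cancel assms(2) by blast
  show "length N < length p"
    using irreducible_word_shortest(1)[OF z(1) zN assms(3)] z(2) by simp
  assume "length p = Suc (length N)"
  then have "z = N"
    using irreducible_word_shortest(2)[OF z(1) zN assms(3)] z(2) by simp
  show "p = word_path T w N"
  proof (rule nth_equalityI)
    show "length p = length (word_path T w N)"
      using z(2) \<open>z = N\<close> by (simp add: word_path_def)
    fix i assume "i < length p"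
    then show "p ! i = word_path T w N ! i"
      using z(2,3) \<open>z = N\<close> by (simp add: word_path_def del: upt_Suc)
  qed
qed

lemma cay_dist_irreducible_word:
  assumes "w \<in> lists \<Sigma>" "N \<in> lists \<Sigma>" "irreducible_word T N"
  shows "cay_dist (cls T w) (cls T (w @ N)) = length N"
  unfolding gdist_def
proof (rule Least_equality)
  have "length (word_path T w N) = Suc (length N)"
    by (simp add: word_path_def)
  then show "\<exists>p. cay_walk p (cls T w) (cls T (w @ N)) \<and> length p = Suc (length N)"
    using word_path_is_walk[OF assms] by blast
next
  fix k assume "\<exists>p. cay_walk p (cls T w) (cls T (w @ N)) \<and> length p = Suc k"
  then obtain p where "cay_walk p (cls T w) (cls T (w @ N))" "length p = Suc k"
    by blast
  then show "length N \<le> k"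
    using walk_to_irreducible_word(1)[OF _ assms(1,3)] by fastforce
qed

lemma geodetic_cayley_graph: "geodetic (grp \<Sigma> T) (cay_adj \<Sigma> T)"
  unfolding geodetic_def
proof (intro ballI)
  fix g h assume "g \<in> grp \<Sigma> T" "h \<in> grp \<Sigma> T"
  obtain w where w: "w \<in> lists \<Sigma>" "g = cls T w"
    using \<open>g \<in> grp \<Sigma> T\<close> by (rule grp_elemE)
  obtain w' where w': "w' \<in> lists \<Sigma>" "h = cls T w'"
    using \<open>h \<in> grp \<Sigma> T\<close> by (rule grp_elemE)
  obtain v where v: "v \<in> lists \<Sigma>" "cls T (w @ v) = cls T []"
    using exists_inverse_word[OF w(1)] by (auto simp: cls_eq_iff)
  obtain N where N: "(v @ w', N) \<in> (rstep T)\<^sup>*" "irreducible_word T N"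
    using exists_normal_form[OF length_reducing] by blast
  have NS: "N \<in> lists \<Sigma>"
    using req_lists[OF rtrancl_rstep_into_req[OF N(1)]] v(1) w'(1) by simp
  have "h = cls T ((w @ v) @ w')"
    using cls_append_right[OF v(2), of w'] w'(2) by simp
  also have "\<dots> = cls T (w @ N)"
    using cls_append_left[of T "v @ w'" N w] rtrancl_rstep_into_req[OF N(1)] by (simp add: cls_eq_iff)
  finally have h: "h = cls T (w @ N)" .
  show "\<exists>!p. cay_walk p g h \<and> length p = Suc (cay_dist g h)"
  proof (rule ex1I[of _ "word_path T w N"])
    show "cay_walk (word_path T w N) g h \<and> length (word_path T w N) = Suc (cay_dist g h)"
      using word_path_is_walk[OF w(1) NS N(2)] cay_dist_irreducible_word[OF w(1) NS N(2)] w(2) h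
      by (simp add: word_path_def)
    fix p assume "cay_walk p g h \<and> length p = Suc (cay_dist g h)"
    then show "p = word_path T w N"
      using cay_dist_irreducible_word[OF w(1) NS N(2)] w(2) h
      by (intro walk_to_irreducible_word(2)[OF _ w(1) N(2)]) auto
  qed
qed

lemma cay_dist_eq_length_iff_irreducible:
  assumes "w \<in> lists \<Sigma>" "z \<in> lists \<Sigma>"
  shows "cay_dist (cls T w) (cls T (w @ z)) = length z \<longleftrightarrow> irreducible_word T z"
proof -
  obtain N where N: "(z, N) \<in> (rstep T)\<^sup>*" "irreducible_word T N"
    using exists_normal_form[OF length_reducing] by blast
  have "cls T (w @ z) = cls T (w @ N)"
    using req_append_context[OF rtrancl_rstep_into_req[OF N(1)], of w "[]"] by (simp add: cls_eq_iff)
  moreover have "N \<in> lists \<Sigma>"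
    using req_lists[OF rtrancl_rstep_into_req[OF N(1)] assms(2)] .
  ultimately have "cay_dist (cls T w) (cls T (w @ z)) = length N"
    using cay_dist_irreducible_word[OF assms(1) _ N(2)] by simp
  moreover have "length N = length z \<longleftrightarrow> z = N"
    using rtrancl_rstep_length_less[OF length_reducing N(1)] by (cases "z = N") auto
  moreover have "z = N \<longleftrightarrow> irreducible_word T z"
    using N rtrancl_rstep_from_irreducible by auto
  ultimately show ?thesis
    by simp
qed

lemma isometric_circuit_long_half_is_lhs:
  assumes circuit: "isometric_circuit (grp \<Sigma> T) (cay_adj \<Sigma> T) u m" and m: "m = 2 * n + 1" "0 < n"
    and letters: "\<forall>i \<in> {1..m}. x i \<in> \<Sigma>"
    and labels: "\<forall>i \<in> {1..m}. \<exists>w. u (i - 1) = cls T w \<and> u i = cls T (w @ [x i])"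
    and w: "w \<in> lists \<Sigma>" "u 0 = cls T w"
  obtains r where "(map x [1..<n + 2], r) \<in> T"
proof -
  define X where "X = map x [1..<n + 2]"
  define P where "P = map x [1..<n + 1]"
  define Q where "Q = map x [2..<n + 2]"
  have X_snoc: "X = P @ [x (n + 1)]"
    by (simp add: X_def P_def)
  have X_Cons: "X = x 1 # Q"
    by (simp add: X_def Q_def upt_conv_Cons numeral_2_eq_2 del: upt_Suc)
  have lists: "X \<in> lists \<Sigma>" "P \<in> lists \<Sigma>" "Q \<in> lists \<Sigma>" "w @ [x 1] \<in> lists \<Sigma>"
    using letters m w(1) by (auto simp: X_def P_def Q_def)
  have lengths: "length X = n + 1" "length P = n" "length Q = n"
    by (auto simp: X_def P_def Q_def)
  have dist: "cay_dist (u i) (u j) = min (j - i) (m + i - j)" if "i < j" "j < m" for i j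
    using circuit that unfolding isometric_circuit_def by blast
  have u_prefix: "u i = cls T (w @ map x [1..<i + 1])" if "i \<le> m" for i
    using labelled_path_prefix[OF labels w(2) that] by simp
  have uX: "u (n + 1) = cls T (w @ X)" and uP: "u n = cls T (w @ P)"
    and u1: "u 1 = cls T (w @ [x 1])"
    using u_prefix[of "n + 1"] u_prefix[of n] u_prefix[of 1] m by (simp_all add: X_def P_def)
  then have uQ: "u (n + 1) = cls T ((w @ [x 1]) @ Q)"
    using X_Cons by simp
  have dX: "cay_dist (cls T w) (cls T (w @ X)) = n" and dP: "cay_dist (cls T w) (cls T (w @ P)) = n"
    and dQ: "cay_dist (cls T (w @ [x 1])) (cls T ((w @ [x 1]) @ Q)) = n"
    using dist[of 0 "n + 1"] dist[of 0 n] dist[of 1 "n + 1"] w(2) uX uP u1 uQ m by simp_all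
  have "\<not> irreducible_word T X"
    using cay_dist_eq_length_iff_irreducible[OF w(1) lists(1)] dX lengths(1) by simp
  moreover have "irreducible_word T (tl X)"
    using cay_dist_eq_length_iff_irreducible[OF lists(4) lists(3)] dQ lengths(3) X_Cons by simp
  moreover have "irreducible_word T (butlast X)"
    using cay_dist_eq_length_iff_irreducible[OF w(1) lists(2)] dP lengths(2) X_snoc by simp
  ultimately show thesis
    using reducible_with_irreducible_ends_is_lhs that unfolding X_def by blast
qed

lemma isometric_circuit_rule:
  assumes circuit: "isometric_circuit (grp \<Sigma> T) (cay_adj \<Sigma> T) u m" and m: "m = 2 * n + 1" "0 < n"
    and letters: "\<forall>i \<in> {1..m}. x i \<in> \<Sigma> \<and> y i \<in> \<Sigma>"
    and labels: "\<forall>i \<in> {1..m}. \<exists>w. u (i - 1) = cls T w \<and> u i = cls T (w @ [x i])"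
    and inverses: "\<forall>i \<in> {1..m}. ([x i, y i], []) \<in> req T"
  shows "(map x [1..<n + 2], map y (rev [n + 2..<m + 1])) \<in> T"
proof -
  define X where "X = map x [1..<n + 2]"
  define Y where "Y = map y (rev [n + 2..<m + 1])"
  obtain w where w: "w \<in> lists \<Sigma>" "u 0 = cls T w"
    using circuit grp_elemE unfolding isometric_circuit_def embedded_circuit_def by blast
  obtain r where r: "(X, r) \<in> T"
    using isometric_circuit_long_half_is_lhs[OF circuit m _ labels w] letters unfolding X_def by blast
  have uX: "u (n + 1) = cls T (w @ X)"
    using labelled_path_prefix[OF labels w(2), of "n + 1"] m by (simp add: X_def)
  have uY: "u (n + 1) = cls T (w @ Y)"
    using labelled_path_suffix[OF labels inverses, of w n] circuit w(2) m
    unfolding isometric_circuit_def embedded_circuit_def Y_def by (simp add: numeral_2_eq_2)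
  have Y: "Y \<in> lists \<Sigma>" "length Y = n"
    using letters m by (auto simp: Y_def)
  have "cay_dist (u 0) (u (n + 1)) = min (n + 1) (m - (n + 1))"
    using circuit m unfolding isometric_circuit_def by simp
  then have "cay_dist (cls T w) (cls T (w @ Y)) = length Y"
    using w(2) uY m Y(2) by simp
  then have "irreducible_word T Y"
    using cay_dist_eq_length_iff_irreducible[OF w(1) Y(1)] by simp
  moreover have "(X, Y) \<in> req T"
    using req_left_cancel[OF w(1)] uX uY by (simp add: cls_eq_iff)
  moreover have "length X = Suc (length Y)"
    using Y(2) by (simp add: X_def)
  ultimately have "r = Y"
    using rule_rhs_eq_irreducible[OF r] by blast
  with r show ?thesis
    by (simp add: X_def Y_def)
qed

end

theorem lemma9:
  fixes \<Sigma> :: "'a set" and T :: "('a list \<times> 'a list) set"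
  assumes "finite_rs \<Sigma> T"
    and "convergent \<Sigma> T"
    and "length_reducing T"
    and "inv_closed \<Sigma> T"
  shows "geodetic (grp \<Sigma> T) (cay_adj \<Sigma> T) \<and>
         (\<forall>u m. isometric_circuit (grp \<Sigma> T) (cay_adj \<Sigma> T) u m \<and> m > 2 \<longrightarrow>
           (\<exists>n > 0. m = 2 * n + 1 \<and>
             (\<forall>(x :: nat \<Rightarrow> 'a) (y :: nat \<Rightarrow> 'a).
                (\<forall>i \<in> {1..m}. x i \<in> \<Sigma> \<and> y i \<in> \<Sigma> \<and>
                   (\<exists>w \<in> lists \<Sigma>. u (i - 1) = cls T w \<and> u i = cls T (w @ [x i])) \<and>
                   ([x i, y i], []) \<in> req T \<and> ([y i, x i], []) \<in> req T)
                \<longrightarrow> (map x [1..<n + 2], map y (rev [n + 2..<m + 1])) \<in> T)))"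
proof -
  interpret group_rewriting_system \<Sigma> T
    using assms unfolding finite_rs_def convergent_def by unfold_locales auto
  have "\<exists>n > 0. m = 2 * n + 1 \<and> (\<forall>x y.
          (\<forall>i \<in> {1..m}. x i \<in> \<Sigma> \<and> y i \<in> \<Sigma> \<and>
             (\<exists>w \<in> lists \<Sigma>. u (i - 1) = cls T w \<and> u i = cls T (w @ [x i])) \<and>
             ([x i, y i], []) \<in> req T \<and> ([y i, x i], []) \<in> req T)
          \<longrightarrow> (map x [1..<n + 2], map y (rev [n + 2..<m + 1])) \<in> T)"
    if circuit: "isometric_circuit (grp \<Sigma> T) (cay_adj \<Sigma> T) u m" and "m > 2" for u m
  proof -
    obtain n where m: "m = 2 * n + 1"
      using isometric_circuit_odd[OF geodetic_cayley_graph cay_adj_symp circuit \<open>m > 2\<close>] by (rule oddE)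
    with \<open>m > 2\<close> have "0 < n" by simp
    show ?thesis
    proof (intro exI[of _ n] conjI allI impI)
      fix x y :: "nat \<Rightarrow> 'a"
      assume labels: "\<forall>i \<in> {1..m}. x i \<in> \<Sigma> \<and> y i \<in> \<Sigma> \<and>
        (\<exists>w \<in> lists \<Sigma>. u (i - 1) = cls T w \<and> u i = cls T (w @ [x i])) \<and>
        ([x i, y i], []) \<in> req T \<and> ([y i, x i], []) \<in> req T"
      show "(map x [1..<n + 2], map y (rev [n + 2..<m + 1])) \<in> T"
        by (rule isometric_circuit_rule[OF circuit m \<open>0 < n\<close>]) (use labels in blast)+
    qed (use m \<open>0 < n\<close> in simp_all)
  qed
  with geodetic_cayley_graph show ?thesis
    by blast
qed

end
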